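(* Let $A$ be an algebra whose commutator is commutative and distributive w.r.t. arbitrary joins and such that $[\theta,\nabla_A]_A=\theta$ for all $\theta\in\mathrm{Con}(A)$. Then $A$ is a Baer algebra if and only if $\theta^\perp\in\mathcal B(\mathrm{Con}(A))$ for every $\theta\in\mathcal K(A)$.
   Context: Let $A$ be an algebra of a fixed signature. $\mathrm{Con}(A)$ is the complete lattice of congruences of $A$, with bottom $\Delta_A$ and top $\nabla_A=A^2$; $\mathrm{PCon}(A)$ is the set of principal congruences and $\mathcal K(A)$ the set of finitely generated (compact) congruences of $A$. $[\cdot,\cdot]_A$ is the term condition commutator: for $\alpha,\beta,\mu\in\mathrm{Con}(A)$, $C(\alpha,\beta;\mu)$ means that for all $n,k$, every $(n+k)$-ary term $t$, all $(a_i,b_i)\in\alpha$ and $(c_j,d_j)\in\beta$: $(t(\bar a,\bar c),t(\bar a,\bar d))\in\mu$ iff $(t(\bar b,\bar c),t(\bar b,\bar d))\in\mu$; $[\alpha,\beta]_A=\bigcap\{\mu: C(\alpha,\beta;\mu)\}$. "The commutator of $A$ is commutative and distributive w.r.t. arbitrary joins" means $[\alpha,\beta]_A=[\beta,\alpha]_A$ and $[\bigvee_{i}\alpha_i,\beta]_A=\bigvee_{i}[\alpha_i,\beta]_A$ for all families. For $\beta\in\mathrm{Con}(A)$, $\beta^\perp=\bigvee\{\alpha\in\mathrm{Con}(A):[\alpha,\beta]_A=\Delta_A\}$. $\mathcal B(\mathrm{Con}(A))$ is the set of complemented elements of the lattice $\mathrm{Con}(A)$. $A$ is a Baer algebra iff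 $\theta^\perp\in\mathcal B(\mathrm{Con}(A))$ for all $\theta\in\mathrm{PCon}(A)$. *)

theory Defs
  imports Main
begin

record ('a, 'f) ualg =
  carrier :: "'a set"
  arity :: "'f \<Rightarrow> nat"
  oper :: "'f \<Rightarrow> 'a list \<Rightarrow> 'a"

definition algebra :: "('a, 'f) ualg \<Rightarrow> bool" where
  "algebra A \<longleftrightarrow> carrier A \<noteq> {} \<and>
     (\<forall>f xs. length xs = arity A f \<and> set xs \<subseteq> carrier A \<longrightarrow> oper A f xs \<in> carrier A)"

datatype 'f uterm = Var nat | Fn 'f "'f uterm list"

primrec wf_term :: "('a, 'f) ualg \<Rightarrow> 'f uterm \<Rightarrow> bool" where
  "wf_term A (Var i) = True"
| "wf_term A (Fn f ts) = (length ts = arity A f \<and> list_all (wf_term A) ts)"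

primrec vars :: "'f uterm \<Rightarrow> nat set" where
  "vars (Var i) = {i}"
| "vars (Fn f ts) = \<Union> (set (map vars ts))"

primrec eval :: "('a, 'f) ualg \<Rightarrow> (nat \<Rightarrow> 'a) \<Rightarrow> 'f uterm \<Rightarrow> 'a" where
  "eval A e (Var i) = e i"
| "eval A e (Fn f ts) = oper A f (map (eval A e) ts)"

definition congruence :: "('a, 'f) ualg \<Rightarrow> 'a rel \<Rightarrow> bool" where
  "congruence A \<theta> \<longleftrightarrow> equiv (carrier A) \<theta> \<and>
     (\<forall>f xs ys. length xs = arity A f \<and> length ys = arity A f \<and>
        (\<forall>i < length xs. (xs ! i, ys ! i) \<in> \<theta>) \<longrightarrow> (oper A f xs, oper A f ys) \<in> \<theta>)"

definition Con :: "('a, 'f) ualg \<Rightarrow> 'a rel set" where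
  "Con A = {\<theta>. congruence A \<theta>}"

definition Delta :: "('a, 'f) ualg \<Rightarrow> 'a rel" where
  "Delta A = Id_on (carrier A)"

definition Nabla :: "('a, 'f) ualg \<Rightarrow> 'a rel" where
  "Nabla A = carrier A \<times> carrier A"

definition Cg :: "('a, 'f) ualg \<Rightarrow> 'a rel \<Rightarrow> 'a rel" where
  "Cg A X = \<Inter> {\<theta> \<in> Con A. X \<subseteq> \<theta>}"

definition ConJoin :: "('a, 'f) ualg \<Rightarrow> 'a rel set \<Rightarrow> 'a rel" where
  "ConJoin A S = Cg A (\<Union> S)"

definition PCon :: "('a, 'f) ualg \<Rightarrow> 'a rel set" where
  "PCon A = {Cg A {(a, b)} | a b. a \<in> carrier A \<and> b \<in> carrier A}"

definition KCon :: "('a, 'f) ualg \<Rightarrow> 'a rel set" where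
  "KCon A = {Cg A X | X. finite X \<and> X \<subseteq> carrier A \<times> carrier A}"

definition TC :: "('a, 'f) ualg \<Rightarrow> 'a rel \<Rightarrow> 'a rel \<Rightarrow> 'a rel \<Rightarrow> bool" where
  "TC A \<alpha> \<beta> \<mu> \<longleftrightarrow>
    (\<forall>(t :: 'f uterm) (n :: nat) (k :: nat) a b c d.
       wf_term A t \<and> vars t \<subseteq> {..< n + k} \<and>
       (\<forall>i < n. (a i, b i) \<in> \<alpha>) \<and> (\<forall>j < k. (c j, d j) \<in> \<beta>) \<longrightarrow>
       ((eval A (\<lambda>i. if i < n then a i else c (i - n)) t,
         eval A (\<lambda>i. if i < n then a i else d (i - n)) t) \<in> \<mu>
        \<longleftrightarrow>
        (eval A (\<lambda>i. if i < n then b i else c (i - n)) t,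
         eval A (\<lambda>i. if i < n then b i else d (i - n)) t) \<in> \<mu>))"

definition comm :: "('a, 'f) ualg \<Rightarrow> 'a rel \<Rightarrow> 'a rel \<Rightarrow> 'a rel" where
  "comm A \<alpha> \<beta> = \<Inter> {\<mu> \<in> Con A. TC A \<alpha> \<beta> \<mu>}"

definition comm_commutative :: "('a, 'f) ualg \<Rightarrow> bool" where
  "comm_commutative A \<longleftrightarrow> (\<forall>\<alpha> \<in> Con A. \<forall>\<beta> \<in> Con A. comm A \<alpha> \<beta> = comm A \<beta> \<alpha>)"

definition comm_join_distributive :: "('a, 'f) ualg \<Rightarrow> bool" where
  "comm_join_distributive A \<longleftrightarrow>
     (\<forall>S \<subseteq> Con A. \<forall>\<beta> \<in> Con A.
        comm A (ConJoin A S) \<beta> = ConJoin A ((\<lambda>\<alpha>. comm A \<alpha> \<beta>) ` S))"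

definition perp :: "('a, 'f) ualg \<Rightarrow> 'a rel \<Rightarrow> 'a rel" where
  "perp A \<beta> = ConJoin A {\<alpha> \<in> Con A. comm A \<alpha> \<beta> = Delta A}"

definition complemented_Con :: "('a, 'f) ualg \<Rightarrow> 'a rel set" where
  "complemented_Con A = {\<theta> \<in> Con A. \<exists>\<gamma> \<in> Con A.
      \<theta> \<inter> \<gamma> = Delta A \<and> ConJoin A {\<theta>, \<gamma>} = Nabla A}"

definition Baer :: "('a, 'f) ualg \<Rightarrow> bool" where
  "Baer A \<longleftrightarrow> (\<forall>\<theta> \<in> PCon A. perp A \<theta> \<in> complemented_Con A)"

end

theory Submission
  imports Defs
begin

text \<open>A compact congruence \<open>Cg A X\<close> with \<open>X\<close> finite is the finite join of the principal
congruences \<open>Cg A {p}\<close>, \<open>p \<in> X\<close>. Since the commutator distributes over joins,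
\<open>(\<beta>\<^sub>1 \<or> \<beta>\<^sub>2)\<^sup>\<bottom> = \<beta>\<^sub>1\<^sup>\<bottom> \<inter> \<beta>\<^sub>2\<^sup>\<bottom>\<close>, so it suffices that complemented congruences are closed
under binary meets. This holds because \<open>[\<theta>, \<nabla>] = \<theta>\<close> makes every complemented \<open>\<sigma>\<close> act as
a unit on the congruences below it: \<open>[\<sigma>, \<gamma>] = \<gamma>\<close> for \<open>\<gamma> \<subseteq> \<sigma>\<close>. Then for complements
\<open>\<gamma>\<^sub>1, \<gamma>\<^sub>2\<close> of \<open>\<sigma>\<^sub>1, \<sigma>\<^sub>2\<close>, the join \<open>\<gamma>\<^sub>1 \<or> \<gamma>\<^sub>2\<close> is a complement of \<open>\<sigma>\<^sub>1 \<inter> \<sigma>\<^sub>2\<close>.\<close>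

lemma eval_congruent:
  assumes "congruence A \<theta>"
  shows "wf_term A t \<Longrightarrow> \<forall>i \<in> vars t. (e i, e' i) \<in> \<theta> \<Longrightarrow> (eval A e t, eval A e' t) \<in> \<theta>"
proof (induction t)
  case (Var i)
  then show ?case by simp
next
  case (Fn f ts)
  have "(eval A e (ts ! i), eval A e' (ts ! i)) \<in> \<theta>" if "i < length ts" for i
  proof -
    from that have t: "ts ! i \<in> set ts" by simp
    with Fn.prems have "wf_term A (ts ! i)" "\<forall>j \<in> vars (ts ! i). (e j, e' j) \<in> \<theta>"
      by (auto simp: list_all_iff)
    with Fn.IH[OF t] show ?thesis by simp
  qed
  with Fn.prems(1) assms show ?case by (simp add: congruence_def)
qed

lemma Con_subset_Nabla: "\<theta> \<in> Con A \<Longrightarrow> \<theta> \<subseteq> Nabla A"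
  unfolding Con_def congruence_def equiv_def refl_on_def Nabla_def by auto

lemma Delta_subset_Con: "\<theta> \<in> Con A \<Longrightarrow> Delta A \<subseteq> \<theta>"
  unfolding Con_def congruence_def equiv_def refl_on_def Delta_def by auto

lemma Inter_in_Con:
  assumes "S \<noteq> {}" and "S \<subseteq> Con A"
  shows "\<Inter> S \<in> Con A"
proof -
  have "\<Inter> S \<subseteq> carrier A \<times> carrier A"
    using assms Con_subset_Nabla unfolding Nabla_def by blast
  moreover have "\<forall>x \<in> carrier A. (x, x) \<in> \<Inter> S"
    using assms(2) unfolding Con_def congruence_def equiv_def refl_on_def by auto
  moreover have "sym (\<Inter> S)" "trans (\<Inter> S)"
    using assms(2) unfolding Con_def congruence_def equiv_def sym_def trans_def by blast+
  moreover have "\<forall>f xs ys. length xs = arity A f \<and> length ys = arity A f \<and>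
      (\<forall>i < length xs. (xs ! i, ys ! i) \<in> \<Inter> S) \<longrightarrow> (oper A f xs, oper A f ys) \<in> \<Inter> S"
    using assms(2) unfolding Con_def congruence_def by blast
  ultimately show ?thesis unfolding Con_def congruence_def equiv_def refl_on_def by auto
qed

lemma Int_in_Con: "\<alpha> \<in> Con A \<Longrightarrow> \<beta> \<in> Con A \<Longrightarrow> \<alpha> \<inter> \<beta> \<in> Con A"
  using Inter_in_Con[of "{\<alpha>, \<beta>}" A] by simp

lemma Nabla_in_Con:
  assumes "algebra A"
  shows "Nabla A \<in> Con A"
proof -
  have "oper A f xs \<in> carrier A \<and> oper A f ys \<in> carrier A"
    if "length xs = arity A f" "length ys = arity A f"
      and "\<forall>i < length xs. (xs ! i, ys ! i) \<in> carrier A \<times> carrier A" for f xs ys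
  proof -
    from that have "set xs \<subseteq> carrier A" "set ys \<subseteq> carrier A"
      by (auto simp: in_set_conv_nth)
    with that assms show ?thesis unfolding algebra_def by auto
  qed
  then show ?thesis
    unfolding Con_def congruence_def Nabla_def equiv_def refl_on_def sym_def trans_def by auto
qed

lemma Delta_in_Con:
  assumes "algebra A"
  shows "Delta A \<in> Con A"
proof -
  have "(oper A f xs, oper A f ys) \<in> Id_on (carrier A)"
    if "length xs = arity A f" "length ys = arity A f"
      and "\<forall>i < length xs. (xs ! i, ys ! i) \<in> Id_on (carrier A)" for f xs ys
  proof -
    from that have "xs = ys" by (intro nth_equalityI) auto
    moreover from that have "set xs \<subseteq> carrier A" by (auto simp: in_set_conv_nth)
    ultimately show ?thesis using that assms unfolding algebra_def by auto
  qed
  then show ?thesis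
    unfolding Con_def congruence_def Delta_def equiv_def refl_on_def sym_def trans_def by auto
qed

lemma Cg_superset: "X \<subseteq> Cg A X"
  unfolding Cg_def by auto

lemma Cg_least: "\<theta> \<in> Con A \<Longrightarrow> X \<subseteq> \<theta> \<Longrightarrow> Cg A X \<subseteq> \<theta>"
  unfolding Cg_def by auto

lemma Cg_mono: "X \<subseteq> Y \<Longrightarrow> Cg A X \<subseteq> Cg A Y"
  unfolding Cg_def by auto

lemma Cg_in_Con: "algebra A \<Longrightarrow> X \<subseteq> Nabla A \<Longrightarrow> Cg A X \<in> Con A"
  unfolding Cg_def by (rule Inter_in_Con) (use Nabla_in_Con in auto)

lemma Cg_Con_eq: "\<theta> \<in> Con A \<Longrightarrow> Cg A \<theta> = \<theta>"
  using Cg_superset Cg_least by blast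

lemma Cg_empty:
  assumes "algebra A"
  shows "Cg A {} = Delta A"
proof (rule subset_antisym)
  show "Cg A {} \<subseteq> Delta A" by (rule Cg_least[OF Delta_in_Con[OF assms]]) simp
  show "Delta A \<subseteq> Cg A {}" by (rule Delta_subset_Con[OF Cg_in_Con[OF assms]]) simp
qed

lemma ConJoin2_in_Con: "algebra A \<Longrightarrow> \<alpha> \<in> Con A \<Longrightarrow> \<beta> \<in> Con A \<Longrightarrow> ConJoin A {\<alpha>, \<beta>} \<in> Con A"
  unfolding ConJoin_def using Con_subset_Nabla by (intro Cg_in_Con) auto

lemma ConJoin2_upper: "\<alpha> \<subseteq> ConJoin A {\<alpha>, \<beta>}" "\<beta> \<subseteq> ConJoin A {\<alpha>, \<beta>}"
  unfolding ConJoin_def using Cg_superset[of "\<alpha> \<union> \<beta>" A] by auto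

lemma ConJoin2_least: "\<theta> \<in> Con A \<Longrightarrow> \<alpha> \<subseteq> \<theta> \<Longrightarrow> \<beta> \<subseteq> \<theta> \<Longrightarrow> ConJoin A {\<alpha>, \<beta>} \<subseteq> \<theta>"
  unfolding ConJoin_def by (intro Cg_least) auto

lemma ConJoin2_absorb:
  assumes "\<beta> \<in> Con A" "\<alpha> \<subseteq> \<beta>"
  shows "ConJoin A {\<alpha>, \<beta>} = \<beta>"
  by (rule subset_antisym[OF ConJoin2_least[OF assms subset_refl] ConJoin2_upper(2)])

lemma ConJoin2_eq_Delta_iff:
  assumes "algebra A" "\<alpha> \<in> Con A" "\<beta> \<in> Con A"
  shows "ConJoin A {\<alpha>, \<beta>} = Delta A \<longleftrightarrow> \<alpha> = Delta A \<and> \<beta> = Delta A"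
proof
  assume join: "ConJoin A {\<alpha>, \<beta>} = Delta A"
  show "\<alpha> = Delta A \<and> \<beta> = Delta A"
    using ConJoin2_upper(1)[of \<alpha> A \<beta>, unfolded join]
      ConJoin2_upper(2)[of \<beta> A \<alpha>, unfolded join]
      Delta_subset_Con[OF assms(2)] Delta_subset_Con[OF assms(3)] by (intro conjI subset_antisym)
next
  have "ConJoin A {Delta A, Delta A} = Delta A"
    by (rule ConJoin2_absorb[OF Delta_in_Con[OF assms(1)] subset_refl])
  then show "\<alpha> = Delta A \<and> \<beta> = Delta A \<Longrightarrow> ConJoin A {\<alpha>, \<beta>} = Delta A"
    by simp
qed

lemma Cg_insert:
  assumes "algebra A" "insert p X \<subseteq> Nabla A"
  shows "Cg A (insert p X) = ConJoin A {Cg A {p}, Cg A X}"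
proof (rule subset_antisym)
  have "{p} \<subseteq> Nabla A" "X \<subseteq> Nabla A" using assms(2) by auto
  with assms have Cg: "Cg A {p} \<in> Con A" "Cg A X \<in> Con A" "Cg A (insert p X) \<in> Con A"
    using Cg_in_Con by blast+
  have "insert p X \<subseteq> ConJoin A {Cg A {p}, Cg A X}"
    using Cg_superset[of "{p}" A] Cg_superset[of X A] ConJoin2_upper(1)[of "Cg A {p}" A "Cg A X"]
      ConJoin2_upper(2)[of "Cg A X" A "Cg A {p}"]
    by blast
  then show "Cg A (insert p X) \<subseteq> ConJoin A {Cg A {p}, Cg A X}"
    by (rule Cg_least[OF ConJoin2_in_Con[OF assms(1) Cg(1,2)]])
  have "Cg A {p} \<subseteq> Cg A (insert p X)" "Cg A X \<subseteq> Cg A (insert p X)"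
    using Cg_mono[of "{p}" "insert p X" A] Cg_mono[of X "insert p X" A] by auto
  then show "ConJoin A {Cg A {p}, Cg A X} \<subseteq> Cg A (insert p X)"
    by (rule ConJoin2_least[OF Cg(3)])
qed

lemma Nabla_complemented:
  assumes "algebra A"
  shows "Nabla A \<in> complemented_Con A"
proof -
  have Delta: "Delta A \<subseteq> Nabla A" using Delta_subset_Con[OF Nabla_in_Con[OF assms]] .
  then have "ConJoin A {Nabla A, Delta A} = Nabla A"
    using ConJoin2_absorb[OF Nabla_in_Con[OF assms]] by (simp add: insert_commute)
  with Delta show ?thesis
    using Nabla_in_Con[OF assms] Delta_in_Con[OF assms] unfolding complemented_Con_def by blast
qed

lemma TC_right:
  fixes A :: "('a, 'f) ualg"
  assumes "\<alpha> \<in> Con A" "\<beta> \<in> Con A"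
  shows "TC A \<alpha> \<beta> \<beta>"
  unfolding TC_def
proof (intro allI impI)
  fix t :: "'f uterm" and n k :: nat and a b c d
  assume h: "wf_term A t \<and> vars t \<subseteq> {..< n + k} \<and>
       (\<forall>i < n. (a i, b i) \<in> \<alpha>) \<and> (\<forall>j < k. (c j, d j) \<in> \<beta>)"
  have cong: "congruence A \<beta>" using assms(2) unfolding Con_def by simp
  have refl: "(x, x) \<in> \<beta>" if "x \<in> carrier A" for x
    using cong that unfolding congruence_def equiv_def refl_on_def by auto
  \<comment> \<open>both sides of the term condition hold: the evaluations differ only in \<open>\<beta>\<close>-related arguments\<close>
  have related: "(eval A (\<lambda>i. if i < n then x i else c (i - n)) t,
                  eval A (\<lambda>i. if i < n then x i else d (i - n)) t) \<in> \<beta>"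
    if "\<forall>i < n. x i \<in> carrier A" for x
    using h that refl by (intro eval_congruent[OF cong]) (auto dest!: subsetD)
  have "\<forall>i < n. a i \<in> carrier A \<and> b i \<in> carrier A"
    using h Con_subset_Nabla[OF assms(1)] unfolding Nabla_def by blast
  then show "((eval A (\<lambda>i. if i < n then a i else c (i - n)) t,
               eval A (\<lambda>i. if i < n then a i else d (i - n)) t) \<in> \<beta>) =
             ((eval A (\<lambda>i. if i < n then b i else c (i - n)) t,
               eval A (\<lambda>i. if i < n then b i else d (i - n)) t) \<in> \<beta>)"
    using related[of a] related[of b] by auto
qed

lemma comm_subset_right: "\<alpha> \<in> Con A \<Longrightarrow> \<beta> \<in> Con A \<Longrightarrow> comm A \<alpha> \<beta> \<subseteq> \<beta>"
  unfolding comm_def using TC_right by blast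

lemma comm_in_Con: "\<alpha> \<in> Con A \<Longrightarrow> \<beta> \<in> Con A \<Longrightarrow> comm A \<alpha> \<beta> \<in> Con A"
  unfolding comm_def using TC_right[of \<alpha> A \<beta>] by (intro Inter_in_Con) auto

lemma perp_in_Con: "algebra A \<Longrightarrow> perp A \<beta> \<in> Con A"
  unfolding perp_def ConJoin_def using Con_subset_Nabla by (intro Cg_in_Con) auto

locale comm_distributive_algebra =
  fixes A :: "('a, 'f) ualg"
  assumes algebra: "algebra A"
    and commutative: "comm_commutative A"
    and join_distributive: "comm_join_distributive A"
begin

lemma comm_sym: "\<alpha> \<in> Con A \<Longrightarrow> \<beta> \<in> Con A \<Longrightarrow> comm A \<alpha> \<beta> = comm A \<beta> \<alpha>"
  using commutative unfolding comm_commutative_def by auto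

lemma comm_subset_Int: "\<alpha> \<in> Con A \<Longrightarrow> \<beta> \<in> Con A \<Longrightarrow> comm A \<alpha> \<beta> \<subseteq> \<alpha> \<inter> \<beta>"
  using comm_subset_right[of \<alpha> A \<beta>] comm_subset_right[of \<beta> A \<alpha>] comm_sym by auto

lemma comm_ConJoin:
  assumes "S \<subseteq> Con A" "\<beta> \<in> Con A"
  shows "comm A (ConJoin A S) \<beta> = ConJoin A ((\<lambda>\<alpha>. comm A \<alpha> \<beta>) ` S)"
  using join_distributive assms unfolding comm_join_distributive_def by blast

lemma comm_Delta_left:
  assumes "\<beta> \<in> Con A"
  shows "comm A (Delta A) \<beta> = Delta A"
proof -
  have "ConJoin A {} = Delta A" unfolding ConJoin_def using Cg_empty[OF algebra] by simp
  then show ?thesis using comm_ConJoin[of "{}" \<beta>] assms by simp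
qed

lemma comm_ConJoin2_left:
  assumes "\<alpha> \<in> Con A" "\<alpha>' \<in> Con A" "\<beta> \<in> Con A"
  shows "comm A (ConJoin A {\<alpha>, \<alpha>'}) \<beta> = ConJoin A {comm A \<alpha> \<beta>, comm A \<alpha>' \<beta>}"
  using comm_ConJoin[of "{\<alpha>, \<alpha>'}" \<beta>] assms by simp

lemma comm_ConJoin2_right:
  assumes "\<alpha> \<in> Con A" "\<beta> \<in> Con A" "\<beta>' \<in> Con A"
  shows "comm A \<alpha> (ConJoin A {\<beta>, \<beta>'}) = ConJoin A {comm A \<alpha> \<beta>, comm A \<alpha> \<beta>'}"
proof -
  have "comm A \<alpha> (ConJoin A {\<beta>, \<beta>'}) = comm A (ConJoin A {\<beta>, \<beta>'}) \<alpha>"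
    using comm_sym assms ConJoin2_in_Con[OF algebra assms(2,3)] by blast
  also have "\<dots> = ConJoin A {comm A \<beta> \<alpha>, comm A \<beta>' \<alpha>}"
    using comm_ConJoin2_left assms by blast
  finally show ?thesis using comm_sym assms by simp
qed

lemma comm_mono_left:
  assumes "\<alpha> \<in> Con A" "\<alpha>' \<in> Con A" "\<beta> \<in> Con A" "\<alpha> \<subseteq> \<alpha>'"
  shows "comm A \<alpha> \<beta> \<subseteq> comm A \<alpha>' \<beta>"
proof -
  have "comm A \<alpha>' \<beta> = comm A (ConJoin A {\<alpha>, \<alpha>'}) \<beta>"
    using ConJoin2_absorb[OF assms(2,4)] by simp
  also have "\<dots> = ConJoin A {comm A \<alpha> \<beta>, comm A \<alpha>' \<beta>}"
    using comm_ConJoin2_left assms by blast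
  finally show ?thesis using ConJoin2_upper(1)[of "comm A \<alpha> \<beta>" A "comm A \<alpha>' \<beta>"] by simp
qed

lemma comm_mono_right:
  assumes "\<alpha> \<in> Con A" "\<beta> \<in> Con A" "\<beta>' \<in> Con A" "\<beta> \<subseteq> \<beta>'"
  shows "comm A \<alpha> \<beta> \<subseteq> comm A \<alpha> \<beta>'"
  using comm_mono_left[OF assms(2,3,1,4)] comm_sym[OF assms(1)] assms(2,3) by simp

lemma subset_perp_iff:
  assumes "\<alpha> \<in> Con A" "\<beta> \<in> Con A"
  shows "\<alpha> \<subseteq> perp A \<beta> \<longleftrightarrow> comm A \<alpha> \<beta> = Delta A"
proof
  assume "comm A \<alpha> \<beta> = Delta A"
  with assms(1) have "\<alpha> \<subseteq> \<Union> {\<alpha> \<in> Con A. comm A \<alpha> \<beta> = Delta A}" by blast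
  then show "\<alpha> \<subseteq> perp A \<beta>"
    unfolding perp_def ConJoin_def using Cg_superset by (rule subset_trans)
next
  let ?S = "{\<alpha> \<in> Con A. comm A \<alpha> \<beta> = Delta A}"
  assume "\<alpha> \<subseteq> perp A \<beta>"
  have "Delta A \<in> ?S" using comm_Delta_left assms(2) Delta_in_Con[OF algebra] by blast
  then have "(\<lambda>\<alpha>. comm A \<alpha> \<beta>) ` ?S = {Delta A}" by auto
  then have "comm A (perp A \<beta>) \<beta> = ConJoin A {Delta A}"
    using comm_ConJoin[of ?S \<beta>] assms(2) unfolding perp_def by simp
  also have "\<dots> = Delta A"
    unfolding ConJoin_def using Cg_Con_eq[OF Delta_in_Con[OF algebra]] by simp
  finally show "comm A \<alpha> \<beta> = Delta A"
    using comm_mono_left[OF assms(1) perp_in_Con[OF algebra] assms(2) \<open>\<alpha> \<subseteq> perp A \<beta>\<close>]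
      Delta_subset_Con[OF comm_in_Con[OF assms]] by blast
qed

lemma perp_ConJoin2:
  assumes "\<beta>\<^sub>1 \<in> Con A" "\<beta>\<^sub>2 \<in> Con A"
  shows "perp A (ConJoin A {\<beta>\<^sub>1, \<beta>\<^sub>2}) = perp A \<beta>\<^sub>1 \<inter> perp A \<beta>\<^sub>2"
proof -
  have below_iff: "\<alpha> \<subseteq> perp A (ConJoin A {\<beta>\<^sub>1, \<beta>\<^sub>2}) \<longleftrightarrow> \<alpha> \<subseteq> perp A \<beta>\<^sub>1 \<inter> perp A \<beta>\<^sub>2"
    if \<alpha>: "\<alpha> \<in> Con A" for \<alpha>
  proof -
    have "\<alpha> \<subseteq> perp A (ConJoin A {\<beta>\<^sub>1, \<beta>\<^sub>2}) \<longleftrightarrow> comm A \<alpha> (ConJoin A {\<beta>\<^sub>1, \<beta>\<^sub>2}) = Delta A"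
      using subset_perp_iff \<alpha> ConJoin2_in_Con[OF algebra assms] by blast
    also have "\<dots> \<longleftrightarrow> comm A \<alpha> \<beta>\<^sub>1 = Delta A \<and> comm A \<alpha> \<beta>\<^sub>2 = Delta A"
      using comm_ConJoin2_right[OF \<alpha> assms]
        ConJoin2_eq_Delta_iff[OF algebra comm_in_Con[OF \<alpha> assms(1)] comm_in_Con[OF \<alpha> assms(2)]]
      by simp
    also have "\<dots> \<longleftrightarrow> \<alpha> \<subseteq> perp A \<beta>\<^sub>1 \<inter> perp A \<beta>\<^sub>2"
      using subset_perp_iff \<alpha> assms by blast
    finally show ?thesis .
  qed
  have "perp A \<beta>\<^sub>1 \<inter> perp A \<beta>\<^sub>2 \<in> Con A"
    using Int_in_Con perp_in_Con[OF algebra] by blast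
  then show ?thesis
    using below_iff[OF perp_in_Con[OF algebra, of "ConJoin A {\<beta>\<^sub>1, \<beta>\<^sub>2}"]] below_iff
    by (intro subset_antisym) simp_all
qed

lemma perp_Delta: "perp A (Delta A) = Nabla A"
proof -
  have "comm A (Nabla A) (Delta A) = Delta A"
    using comm_sym[OF Nabla_in_Con[OF algebra] Delta_in_Con[OF algebra]]
      comm_Delta_left[OF Nabla_in_Con[OF algebra]] by simp
  then have "Nabla A \<subseteq> perp A (Delta A)"
    using subset_perp_iff Nabla_in_Con Delta_in_Con algebra by blast
  then show ?thesis using Con_subset_Nabla[OF perp_in_Con[OF algebra]] by blast
qed

end

locale comm_Nabla_algebra = comm_distributive_algebra +
  assumes comm_Nabla: "\<theta> \<in> Con A \<Longrightarrow> comm A \<theta> (Nabla A) = \<theta>"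
begin

lemma comm_complemented_below:
  assumes \<sigma>: "\<sigma> \<in> Con A" and \<tau>: "\<tau> \<in> Con A"
    and meet: "\<sigma> \<inter> \<tau> = Delta A" and join: "ConJoin A {\<sigma>, \<tau>} = Nabla A"
    and \<gamma>: "\<gamma> \<in> Con A" "\<gamma> \<subseteq> \<sigma>"
  shows "comm A \<sigma> \<gamma> = \<gamma>"
proof -
  have "comm A \<gamma> \<tau> \<subseteq> \<sigma> \<inter> \<tau>"
    using comm_subset_Int[OF \<gamma>(1) \<tau>] \<gamma>(2) by blast
  then have \<gamma>\<tau>: "comm A \<gamma> \<tau> = Delta A"
    using meet Delta_subset_Con[OF comm_in_Con[OF \<gamma>(1) \<tau>]] by blast
  have "\<gamma> = comm A \<gamma> (Nabla A)" using comm_Nabla \<gamma>(1) by simp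
  also have "\<dots> = ConJoin A {comm A \<gamma> \<sigma>, Delta A}"
    using comm_ConJoin2_right[OF \<gamma>(1) \<sigma> \<tau>] join \<gamma>\<tau> by simp
  also have "\<dots> = comm A \<gamma> \<sigma>"
    using ConJoin2_absorb[OF comm_in_Con[OF \<gamma>(1) \<sigma>] Delta_subset_Con[OF comm_in_Con[OF \<gamma>(1) \<sigma>]]]
    by (simp add: insert_commute)
  finally show ?thesis using comm_sym[OF \<sigma> \<gamma>(1)] by simp
qed

lemma Int_Int_ConJoin2_complements:
  assumes \<sigma>\<^sub>1: "\<sigma>\<^sub>1 \<in> Con A" and \<tau>\<^sub>1: "\<tau>\<^sub>1 \<in> Con A"
    and meet1: "\<sigma>\<^sub>1 \<inter> \<tau>\<^sub>1 = Delta A" and join1: "ConJoin A {\<sigma>\<^sub>1, \<tau>\<^sub>1} = Nabla A"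
    and \<sigma>\<^sub>2: "\<sigma>\<^sub>2 \<in> Con A" and \<tau>\<^sub>2: "\<tau>\<^sub>2 \<in> Con A" and meet2: "\<sigma>\<^sub>2 \<inter> \<tau>\<^sub>2 = Delta A"
  shows "\<sigma>\<^sub>1 \<inter> \<sigma>\<^sub>2 \<inter> ConJoin A {\<tau>\<^sub>1, \<tau>\<^sub>2} = Delta A"
proof -
  define \<tau> where "\<tau> = ConJoin A {\<tau>\<^sub>1, \<tau>\<^sub>2}"
  have \<tau>_Con: "\<tau> \<in> Con A" unfolding \<tau>_def using ConJoin2_in_Con[OF algebra \<tau>\<^sub>1 \<tau>\<^sub>2] .
  define \<gamma> where "\<gamma> = \<sigma>\<^sub>1 \<inter> \<sigma>\<^sub>2 \<inter> \<tau>"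
  have \<gamma>_Con: "\<gamma> \<in> Con A" unfolding \<gamma>_def using Int_in_Con \<sigma>\<^sub>1 \<sigma>\<^sub>2 \<tau>_Con by blast
  have "\<gamma> = comm A \<sigma>\<^sub>1 \<gamma>"
    using comm_complemented_below[OF \<sigma>\<^sub>1 \<tau>\<^sub>1 meet1 join1 \<gamma>_Con] \<gamma>_def by auto
  also have "\<dots> \<subseteq> comm A \<sigma>\<^sub>1 \<tau>"
    using comm_mono_right[OF \<sigma>\<^sub>1 \<gamma>_Con \<tau>_Con] \<gamma>_def by auto
  also have "\<dots> = ConJoin A {comm A \<sigma>\<^sub>1 \<tau>\<^sub>1, comm A \<sigma>\<^sub>1 \<tau>\<^sub>2}"
    unfolding \<tau>_def using comm_ConJoin2_right[OF \<sigma>\<^sub>1 \<tau>\<^sub>1 \<tau>\<^sub>2] .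
  also have "\<dots> \<subseteq> \<tau>\<^sub>2"
    using comm_subset_Int[OF \<sigma>\<^sub>1 \<tau>\<^sub>1] comm_subset_Int[OF \<sigma>\<^sub>1 \<tau>\<^sub>2] meet1 Delta_subset_Con[OF \<tau>\<^sub>2]
    by (intro ConJoin2_least[OF \<tau>\<^sub>2]) auto
  finally show ?thesis
    using meet2 Delta_subset_Con[OF \<gamma>_Con] unfolding \<gamma>_def \<tau>_def by auto
qed

lemma ConJoin2_Int_ConJoin2_complements:
  assumes \<sigma>\<^sub>1: "\<sigma>\<^sub>1 \<in> Con A" and \<tau>\<^sub>1: "\<tau>\<^sub>1 \<in> Con A" and join1: "ConJoin A {\<sigma>\<^sub>1, \<tau>\<^sub>1} = Nabla A"
    and \<sigma>\<^sub>2: "\<sigma>\<^sub>2 \<in> Con A" and \<tau>\<^sub>2: "\<tau>\<^sub>2 \<in> Con A" and join2: "ConJoin A {\<sigma>\<^sub>2, \<tau>\<^sub>2} = Nabla A"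
  shows "ConJoin A {\<sigma>\<^sub>1 \<inter> \<sigma>\<^sub>2, ConJoin A {\<tau>\<^sub>1, \<tau>\<^sub>2}} = Nabla A"
proof -
  define \<tau> where "\<tau> = ConJoin A {\<tau>\<^sub>1, \<tau>\<^sub>2}"
  define \<kappa> where "\<kappa> = ConJoin A {\<sigma>\<^sub>1 \<inter> \<sigma>\<^sub>2, \<tau>}"
  have \<kappa>_Con: "\<kappa> \<in> Con A"
    unfolding \<kappa>_def \<tau>_def
    using ConJoin2_in_Con[OF algebra Int_in_Con[OF \<sigma>\<^sub>1 \<sigma>\<^sub>2] ConJoin2_in_Con[OF algebra \<tau>\<^sub>1 \<tau>\<^sub>2]] .
  have \<tau>_below: "\<tau>\<^sub>1 \<subseteq> \<kappa>" "\<tau>\<^sub>2 \<subseteq> \<kappa>"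
    using ConJoin2_upper(1)[of \<tau>\<^sub>1 A \<tau>\<^sub>2] ConJoin2_upper(2)[of \<tau>\<^sub>2 A \<tau>\<^sub>1]
      ConJoin2_upper(2)[of \<tau> A "\<sigma>\<^sub>1 \<inter> \<sigma>\<^sub>2"]
    unfolding \<kappa>_def \<tau>_def by auto
  have "\<sigma>\<^sub>1 = ConJoin A {comm A \<sigma>\<^sub>1 \<sigma>\<^sub>2, comm A \<sigma>\<^sub>1 \<tau>\<^sub>2}"
    using comm_Nabla[OF \<sigma>\<^sub>1] comm_ConJoin2_right[OF \<sigma>\<^sub>1 \<sigma>\<^sub>2 \<tau>\<^sub>2] join2 by simp
  also have "\<dots> \<subseteq> \<kappa>"
    using comm_subset_Int[OF \<sigma>\<^sub>1 \<sigma>\<^sub>2] comm_subset_Int[OF \<sigma>\<^sub>1 \<tau>\<^sub>2] \<tau>_below(2)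
      ConJoin2_upper(1)[of "\<sigma>\<^sub>1 \<inter> \<sigma>\<^sub>2" A \<tau>]
    unfolding \<kappa>_def by (intro ConJoin2_least[OF \<kappa>_Con[unfolded \<kappa>_def]]) auto
  finally have "ConJoin A {\<sigma>\<^sub>1, \<tau>\<^sub>1} \<subseteq> \<kappa>"
    by (rule ConJoin2_least[OF \<kappa>_Con _ \<tau>_below(1)])
  then show ?thesis
    using join1 Con_subset_Nabla[OF \<kappa>_Con] unfolding \<kappa>_def \<tau>_def by auto
qed

lemma complemented_Int:
  assumes "\<sigma>\<^sub>1 \<in> complemented_Con A" "\<sigma>\<^sub>2 \<in> complemented_Con A"
  shows "\<sigma>\<^sub>1 \<inter> \<sigma>\<^sub>2 \<in> complemented_Con A"
proof -
  obtain \<tau>\<^sub>1 where 1: "\<sigma>\<^sub>1 \<in> Con A" "\<tau>\<^sub>1 \<in> Con A"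
    "\<sigma>\<^sub>1 \<inter> \<tau>\<^sub>1 = Delta A" "ConJoin A {\<sigma>\<^sub>1, \<tau>\<^sub>1} = Nabla A"
    using assms(1) unfolding complemented_Con_def by blast
  obtain \<tau>\<^sub>2 where 2: "\<sigma>\<^sub>2 \<in> Con A" "\<tau>\<^sub>2 \<in> Con A"
    "\<sigma>\<^sub>2 \<inter> \<tau>\<^sub>2 = Delta A" "ConJoin A {\<sigma>\<^sub>2, \<tau>\<^sub>2} = Nabla A"
    using assms(2) unfolding complemented_Con_def by blast
  let ?\<tau> = "ConJoin A {\<tau>\<^sub>1, \<tau>\<^sub>2}"
  have "?\<tau> \<in> Con A \<and> \<sigma>\<^sub>1 \<inter> \<sigma>\<^sub>2 \<inter> ?\<tau> = Delta A \<and> ConJoin A {\<sigma>\<^sub>1 \<inter> \<sigma>\<^sub>2, ?\<tau>} = Nabla A"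
    using ConJoin2_in_Con[OF algebra 1(2) 2(2)] Int_Int_ConJoin2_complements[OF 1 2(1-3)]
      ConJoin2_Int_ConJoin2_complements[OF 1(1,2,4) 2(1,2,4)] by (intro conjI)
  then show ?thesis
    using Int_in_Con[OF 1(1) 2(1)] unfolding complemented_Con_def by blast
qed

lemma perp_Cg_finite_complemented:
  assumes principal: "\<forall>\<theta> \<in> PCon A. perp A \<theta> \<in> complemented_Con A"
  shows "finite X \<Longrightarrow> X \<subseteq> carrier A \<times> carrier A \<Longrightarrow> perp A (Cg A X) \<in> complemented_Con A"
proof (induction X rule: finite_induct)
  case empty
  then show ?case
    using Cg_empty[OF algebra] perp_Delta Nabla_complemented[OF algebra] by simp
next
  case (insert p X)
  then have N: "insert p X \<subseteq> Nabla A" unfolding Nabla_def by simp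
  then have "Cg A {p} \<in> Con A" "Cg A X \<in> Con A"
    using Cg_in_Con[OF algebra] by blast+
  then have "perp A (Cg A (insert p X)) = perp A (Cg A {p}) \<inter> perp A (Cg A X)"
    unfolding Cg_insert[OF algebra N] by (rule perp_ConJoin2)
  moreover obtain a b where "p = (a, b)" by force
  with insert.prems have "Cg A {p} \<in> PCon A" unfolding PCon_def by auto
  moreover have "perp A (Cg A X) \<in> complemented_Con A"
    using insert.IH insert.prems by simp
  ultimately show ?case
    using complemented_Int principal by simp
qed

end

theorem mainTheorem5:
  fixes A :: "('a, 'f) ualg"
  assumes "algebra A"
    and "comm_commutative A"
    and "comm_join_distributive A"
    and "\<forall>\<theta> \<in> Con A. comm A \<theta> (Nabla A) = \<theta>"
  shows "Baer A \<longleftrightarrow> (\<forall>\<theta> \<in> KCon A. perp A \<theta> \<in> complemented_Con A)"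
proof
  interpret comm_Nabla_algebra A
    using assms by unfold_locales auto
  assume "Baer A"
  then show "\<forall>\<theta> \<in> KCon A. perp A \<theta> \<in> complemented_Con A"
    using perp_Cg_finite_complemented unfolding Baer_def KCon_def by auto
next
  assume "\<forall>\<theta> \<in> KCon A. perp A \<theta> \<in> complemented_Con A"
  moreover have "PCon A \<subseteq> KCon A" unfolding PCon_def KCon_def by blast
  ultimately show "Baer A" unfolding Baer_def by blast
qed

end
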